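(* Fix $\omega_c>0$. For each integer $D\ge 1$ define the polynomial in $z^{-1}$ $$\psi_D(z):=\sum_{i=0}^{D-1}\frac{2\omega_c}{D\pi}\,\mathrm{sinc}\!\left(\frac{2\omega_c}{D\pi}\Big(i-\frac{D-1}{2}\Big)\right)z^{-i},$$ where $\mathrm{sinc}(x)=\sin(\pi x)/(\pi x)$ for $x\neq 0$ and $\mathrm{sinc}(0)=1$. Then for every fixed $\omega\in\mathbb{R}$, $$\lim_{D\to\infty}\left|\psi_D\!\left(e^{-2\mathrm{i}\omega/D}\right)\right|=\frac{\left|\mathrm{Si}(\omega+\omega_c)-\mathrm{Si}(\omega-\omega_c)\right|}{\pi}=:|\Psi(\omega)|,$$ where $\mathrm{Si}(s)=\int_0^s\frac{\sin\theta}{\theta}\,d\theta$ is the sine integral. Moreover $|\Psi(\omega)|\to 0$ as $\omega\to\pm\infty$, and consequently, for any fixed $\delta\in(0,1)$, the quantity $\frac{\delta^2|\Psi(\omega)|^2}{1-\delta^2|\Psi(\omega)|^2}$ tends to $0$ as $\omega\to\pm\infty$.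
   Context: Here $e^{-2\mathrm{i}\omega/D}$ is the point $z(\omega)=e^{-2\mathrm{i}\omega\epsilon}$ with $\epsilon=1/D$, which lies on the unit circle for real $\omega$. *)

theory Defs
  imports "HOL-Probability.Sinc_Integral"
begin

definition nsinc :: "real \<Rightarrow> real" where
  "nsinc x = (if x = 0 then 1 else sin (pi * x) / (pi * x))"

definition psiD :: "real \<Rightarrow> nat \<Rightarrow> complex \<Rightarrow> complex" where
  "psiD wc D z = (\<Sum>i<D. complex_of_real
      ((2 * wc / (real D * pi)) * nsinc ((2 * wc / (real D * pi)) * (real i - (real D - 1) / 2)))
      * (inverse z) ^ i)"

definition absPsi :: "real \<Rightarrow> real \<Rightarrow> real" where
  "absPsi wc w = \<bar>Si (w + wc) - Si (w - wc)\<bar> / pi"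

end

theory Submission
  imports Defs
begin

text \<open>On the unit circle \<open>z = e^{-2i\<omega>/D}\<close> the coefficients of \<open>\<psi>\<^sub>D\<close> are symmetric about
  \<open>(D - 1)/2\<close>, so after pulling out the unimodular factor \<open>z^{-(D-1)/2}\<close> the value \<open>\<psi>\<^sub>D(z)\<close> becomes a
  real midpoint Riemann sum over \<open>[-1, 1]\<close> of the kernel \<open>s \<mapsto> \<omega>\<^sub>c sinc(\<omega>\<^sub>c s) cos(\<omega> s) / \<pi>\<close>.
  By the product-to-sum formula this kernel is the derivative of
  \<open>(Si((\<omega>\<^sub>c + \<omega>) s) + Si((\<omega>\<^sub>c - \<omega>) s)) / (2\<pi>)\<close>, so the sums converge to
  \<open>(Si(\<omega> + \<omega>\<^sub>c) - Si(\<omega> - \<omega>\<^sub>c)) / \<pi>\<close>. Decay at \<open>\<plusminus>\<infinity>\<close> follows from \<open>Si(s) \<rightarrow> \<pi>/2\<close>.\<close>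

lemma midpoint_rule_error:
  fixes H h :: "real \<Rightarrow> real"
  assumes "0 < \<delta>"
    and der: "\<And>x. x \<in> {u..u + \<delta>} \<Longrightarrow> (H has_real_derivative h x) (at x)"
    and osc: "\<And>x y. x \<in> {u..u + \<delta>} \<Longrightarrow> y \<in> {u..u + \<delta>} \<Longrightarrow> \<bar>h x - h y\<bar> \<le> \<epsilon>"
  shows "\<bar>\<delta> * h (u + \<delta> / 2) - (H (u + \<delta>) - H u)\<bar> \<le> \<delta> * \<epsilon>"
proof -
  obtain z where z: "u < z" "z < u + \<delta>" and mvt: "H (u + \<delta>) - H u = \<delta> * h z"
    using MVT2[of u "u + \<delta>" H h] der \<open>0 < \<delta>\<close> by auto
  have "\<bar>\<delta> * h (u + \<delta> / 2) - (H (u + \<delta>) - H u)\<bar> = \<delta> * \<bar>h (u + \<delta> / 2) - h z\<bar>"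
    using \<open>0 < \<delta>\<close> by (simp add: mvt abs_mult flip: right_diff_distrib)
  also have "\<dots> \<le> \<delta> * \<epsilon>"
    using osc z \<open>0 < \<delta>\<close> by (intro mult_left_mono) auto
  finally show ?thesis .
qed

lemma tendsto_midpoint_Riemann_sum:
  fixes H h :: "real \<Rightarrow> real"
  assumes "a < b"
    and der: "\<And>x. x \<in> {a..b} \<Longrightarrow> (H has_real_derivative h x) (at x)"
    and cont: "continuous_on {a..b} h"
  shows "(\<lambda>n. \<Sum>i<n. (b - a) / real n * h (a + (real i + 1 / 2) * ((b - a) / real n)))
           \<longlonglongrightarrow> H b - H a"
proof (rule LIMSEQ_I)
  fix r :: real
  assume "0 < r"
  define \<epsilon> where "\<epsilon> = r / (2 * (b - a))"
  have "0 < \<epsilon>" using \<open>0 < r\<close> \<open>a < b\<close> by (simp add: \<epsilon>_def)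
  obtain d where "0 < d"
    and d: "\<And>x y. x \<in> {a..b} \<Longrightarrow> y \<in> {a..b} \<Longrightarrow> \<bar>x - y\<bar> < d \<Longrightarrow> \<bar>h x - h y\<bar> < \<epsilon>"
    using compact_uniformly_continuous[OF cont compact_Icc] \<open>0 < \<epsilon>\<close>
    unfolding uniformly_continuous_on_def dist_real_def by metis
  obtain N :: nat where N: "(b - a) / d < real N"
    using reals_Archimedean2 by blast
  show "\<exists>N. \<forall>n\<ge>N. norm ((\<Sum>i<n. (b - a) / real n * h (a + (real i + 1 / 2) * ((b - a) / real n)))
                     - (H b - H a)) < r"
  proof (intro exI allI impI)
    fix n
    assume "Suc N \<le> n"
    define \<delta> where "\<delta> = (b - a) / real n"
    define x where "x i = a + real i * \<delta>" for i
    have "0 < real n" using \<open>Suc N \<le> n\<close> by simp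
    have "0 < \<delta>" using \<open>a < b\<close> \<open>0 < real n\<close> by (simp add: \<delta>_def)
    have "(b - a) / d < real n"
      using N \<open>Suc N \<le> n\<close> by linarith
    then have "\<delta> < d"
      using \<open>0 < d\<close> \<open>0 < real n\<close> by (simp add: \<delta>_def field_simps)
    have "x n = b" using \<open>0 < real n\<close> by (simp add: x_def \<delta>_def)
    have cell: "\<bar>\<delta> * h (x i + \<delta> / 2) - (H (x (Suc i)) - H (x i))\<bar> \<le> \<delta> * \<epsilon>" if "i < n" for i
    proof -
      have x_Suc: "x (Suc i) = x i + \<delta>"
        by (simp add: x_def algebra_simps)
      have "real (Suc i) * \<delta> \<le> real n * \<delta>"
        using that \<open>0 < \<delta>\<close> by (intro mult_right_mono) auto
      then have "x i + \<delta> \<le> b"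
        using \<open>x n = b\<close> by (simp add: x_def algebra_simps)
      then have sub: "{x i..x i + \<delta>} \<subseteq> {a..b}"
        using \<open>0 < \<delta>\<close> by (auto simp: x_def)
      have osc: "\<bar>h y - h y'\<bar> \<le> \<epsilon>" if "y \<in> {x i..x i + \<delta>}" "y' \<in> {x i..x i + \<delta>}" for y y'
      proof -
        have "\<bar>y - y'\<bar> < d"
          using that \<open>\<delta> < d\<close> by (auto simp: abs_less_iff)
        then show ?thesis
          using d[of y y'] sub that by force
      qed
      show ?thesis
        unfolding x_Suc by (rule midpoint_rule_error[OF \<open>0 < \<delta>\<close>]) (use der sub osc in auto)
    qed
    have "H b - H a = (\<Sum>i<n. H (x (Suc i)) - H (x i))"
      using sum_lessThan_telescope[of "\<lambda>i. H (x i)" n] \<open>x n = b\<close> by (simp add: x_def)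
    moreover have "a + (real i + 1 / 2) * \<delta> = x i + \<delta> / 2" for i
      by (simp add: x_def algebra_simps)
    ultimately have "\<bar>(\<Sum>i<n. \<delta> * h (a + (real i + 1 / 2) * \<delta>)) - (H b - H a)\<bar>
        = \<bar>\<Sum>i<n. \<delta> * h (x i + \<delta> / 2) - (H (x (Suc i)) - H (x i))\<bar>"
      by (simp only: sum_subtractf)
    also have "\<dots> \<le> (\<Sum>i<n. \<bar>\<delta> * h (x i + \<delta> / 2) - (H (x (Suc i)) - H (x i))\<bar>)"
      by (rule sum_abs)
    also have "\<dots> \<le> (\<Sum>i<n. \<delta> * \<epsilon>)"
      by (rule sum_mono) (use cell in auto)
    also have "\<dots> = r / 2"
      using \<open>0 < real n\<close> \<open>a < b\<close> by (simp add: \<delta>_def \<epsilon>_def field_simps)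
    finally show "norm ((\<Sum>i<n. (b - a) / real n * h (a + (real i + 1 / 2) * ((b - a) / real n)))
                     - (H b - H a)) < r"
      using \<open>0 < r\<close> by (simp add: \<delta>_def)
  qed
qed

lemma Si_minus: "Si (- x) = - Si x"
  using Si_neg[of x] Si_neg[of "- x"] by (cases "0 \<le> x") auto

lemma sinc_mul_cos:
  "2 * c * sinc (c * s) * cos (w * s) = (c + w) * sinc ((c + w) * s) + (c - w) * sinc ((c - w) * s)"
proof (cases "s = 0")
  case False
  have scale: "k * sinc (k * s) = sin (k * s) / s" for k
    using False by auto
  have "2 * c * sinc (c * s) * cos (w * s) = 2 * sin (c * s) * cos (w * s) / s"
    by (simp only: mult.assoc[of 2] scale mult.commute[of "sin (c * s) / s"]) simp
  also have "2 * sin (c * s) * cos (w * s) = sin ((c + w) * s) + sin ((c - w) * s)"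
    by (simp add: distrib_right left_diff_distrib sin_add sin_diff)
  finally show ?thesis
    by (simp only: scale add_divide_distrib)
qed simp

definition lowpass_kernel :: "real \<Rightarrow> real \<Rightarrow> real \<Rightarrow> real" where
  "lowpass_kernel wc w s = wc * sinc (wc * s) * cos (w * s) / pi"

lemma has_real_derivative_Si_lowpass:
  "((\<lambda>s. (Si ((wc + w) * s) + Si ((wc - w) * s)) / (2 * pi)) has_real_derivative
     lowpass_kernel wc w s) (at s)"
proof -
  have Si_scaled: "((\<lambda>s. Si (k * s)) has_real_derivative k * sinc (k * s)) (at s)" for k
    using DERIV_chain2[OF DERIV_Si DERIV_cmult_Id, of k s] by (simp add: mult.commute)
  show ?thesis
    by (rule DERIV_cong[OF DERIV_cdivide[OF DERIV_add[OF Si_scaled Si_scaled]]])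
      (simp only: lowpass_kernel_def sinc_mul_cos[symmetric], simp)
qed

lemma sum_cis_symmetric:
  fixes c \<alpha> :: "nat \<Rightarrow> real"
  assumes "\<And>i. i < n \<Longrightarrow> c (n - Suc i) = c i"
    and "\<And>i. i < n \<Longrightarrow> \<alpha> (n - Suc i) = - \<alpha> i"
  shows "(\<Sum>i<n. complex_of_real (c i) * cis (\<alpha> i)) = complex_of_real (\<Sum>i<n. c i * cos (\<alpha> i))"
proof -
  have "(\<Sum>i<n. c i * sin (\<alpha> i)) = (\<Sum>i<n. c (n - Suc i) * sin (\<alpha> (n - Suc i)))"
    by (rule sum.nat_diff_reindex[symmetric])
  also have "\<dots> = - (\<Sum>i<n. c i * sin (\<alpha> i))"
    by (simp add: assms sum_negf)
  finally have "(\<Sum>i<n. c i * sin (\<alpha> i)) = 0"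
    by simp
  then show ?thesis
    by (intro complex_eqI) (simp_all add: Re_sum Im_sum)
qed

lemma cmod_psiD_unit_circle:
  assumes "0 < D"
  shows "cmod (psiD wc D (exp (- 2 * \<i> * complex_of_real w / of_nat D)))
    = \<bar>\<Sum>i<D. 2 / real D * lowpass_kernel wc w (- 1 + (real i + 1 / 2) * (2 / real D))\<bar>"
proof -
  define s where "s i = - 1 + (real i + 1 / 2) * (2 / real D)" for i
  define c where "c i = 2 / real D * (wc * sinc (wc * s i) / pi)" for i
  define \<phi> where "\<phi> = w * (real D - 1) / real D"
  have "0 < real D" using assms by simp
  have coeff: "2 * wc / (real D * pi) * nsinc (2 * wc / (real D * pi) * (real i - (real D - 1) / 2))
      = c i" for i
  proof -
    have nsinc: "nsinc x = sinc (pi * x)" for x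
      by (simp add: nsinc_def)
    have arg: "pi * (2 * wc / (real D * pi) * (real i - (real D - 1) / 2)) = wc * s i"
      using \<open>0 < real D\<close> by (simp add: s_def field_simps)
    have scale: "2 * wc / (real D * pi) * y = 2 / real D * (wc * y / pi)" for y
      by simp
    show ?thesis
      unfolding nsinc arg by (simp only: scale c_def)
  qed
  have power: "inverse (exp (- 2 * \<i> * complex_of_real w / of_nat D)) ^ i
      = exp (\<i> * complex_of_real \<phi>) * cis (w * s i)" for i
  proof -
    have "inverse (exp (- 2 * \<i> * complex_of_real w / of_nat D)) ^ i
        = exp (of_nat i * (2 * \<i> * complex_of_real w / of_nat D))"
      by (simp add: exp_minus[symmetric] exp_of_nat_mult[symmetric])
    also have "of_nat i * (2 * \<i> * complex_of_real w / of_nat D)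
        = \<i> * complex_of_real \<phi> + \<i> * complex_of_real (w * s i)"
      using \<open>0 < real D\<close> by (simp add: \<phi>_def s_def field_simps)
    finally show ?thesis
      by (simp add: exp_add cis_conv_exp)
  qed
  have s_reflect: "s (D - Suc i) = - s i" if "i < D" for i
    using that \<open>0 < real D\<close> by (simp add: s_def of_nat_diff field_simps)
  have "psiD wc D (exp (- 2 * \<i> * complex_of_real w / of_nat D))
      = exp (\<i> * complex_of_real \<phi>) * (\<Sum>i<D. complex_of_real (c i) * cis (w * s i))"
    unfolding psiD_def power coeff by (simp add: sum_distrib_left algebra_simps)
  also have "\<dots> = exp (\<i> * complex_of_real \<phi>) * complex_of_real (\<Sum>i<D. c i * cos (w * s i))"
    by (subst sum_cis_symmetric) (simp_all add: s_reflect c_def)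
  also have "(\<Sum>i<D. c i * cos (w * s i)) = (\<Sum>i<D. 2 / real D * lowpass_kernel wc w (s i))"
    by (rule sum.cong) (simp_all add: c_def lowpass_kernel_def)
  finally show ?thesis
    by (simp only: norm_mult norm_exp_i_times norm_of_real mult_1_left s_def)
qed

lemma psiD_tendsto_absPsi:
  "(\<lambda>D. cmod (psiD wc D (exp (- 2 * \<i> * complex_of_real w / of_nat D)))) \<longlonglongrightarrow> absPsi wc w"
proof -
  let ?R = "\<lambda>D. \<bar>\<Sum>i<D. 2 / real D * lowpass_kernel wc w (- 1 + (real i + 1 / 2) * (2 / real D))\<bar>"
  define H where "H s = (Si ((wc + w) * s) + Si ((wc - w) * s)) / (2 * pi)" for s
  have "(H has_real_derivative lowpass_kernel wc w s) (at s)" for s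
    unfolding H_def by (rule has_real_derivative_Si_lowpass)
  moreover have "continuous_on {- 1..1} (lowpass_kernel wc w)"
    unfolding lowpass_kernel_def[abs_def] by (intro continuous_intros) auto
  ultimately have "(\<lambda>n. \<Sum>i<n. (1 - - 1) / real n *
      lowpass_kernel wc w (- 1 + (real i + 1 / 2) * ((1 - - 1) / real n))) \<longlonglongrightarrow> H 1 - H (- 1)"
    by (intro tendsto_midpoint_Riemann_sum) auto
  then have "?R \<longlonglongrightarrow> \<bar>H 1 - H (- 1)\<bar>"
    by (intro tendsto_rabs) simp
  also have "\<bar>H 1 - H (- 1)\<bar> = absPsi wc w"
  proof -
    have "H (- 1) = - H 1"
      unfolding H_def mult_minus_right Si_minus by (simp add: minus_divide_left)
    then have "H 1 - H (- 1) = (Si (wc + w) + Si (wc - w)) / pi"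
      by (simp add: H_def)
    also have "Si (wc - w) = - Si (w - wc)"
      using Si_minus[of "w - wc"] by simp
    finally show ?thesis
      by (simp add: absPsi_def add.commute)
  qed
  finally have "?R \<longlonglongrightarrow> absPsi wc w" .
  moreover have "\<forall>\<^sub>F D in sequentially. ?R D = cmod (psiD wc D (exp (- 2 * \<i> * complex_of_real w / of_nat D)))"
    using eventually_gt_at_top[of 0] by eventually_elim (simp only: cmod_psiD_unit_circle)
  ultimately show ?thesis
    by (rule Lim_transform_eventually)
qed

lemma absPsi_minus: "absPsi wc (- w) = absPsi wc w"
proof -
  have "Si (- w + wc) = - Si (w - wc)" "Si (- w - wc) = - Si (w + wc)"
    using Si_minus[of "w - wc"] Si_minus[of "w + wc"] by simp_all
  then show ?thesis
    by (simp only: absPsi_def) (simp add: abs_minus_commute)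
qed

lemma absPsi_tendsto_at_top: "(absPsi wc \<longlongrightarrow> 0) at_top"
proof -
  have "((\<lambda>w. Si (c + w)) \<longlongrightarrow> pi / 2) at_top" for c
    by (rule filterlim_compose[OF Si_at_top
          filterlim_tendsto_add_at_top[OF tendsto_const filterlim_ident]])
  from tendsto_diff[OF this[of wc] this[of "- wc"]]
  have "((\<lambda>w. Si (w + wc) - Si (w - wc)) \<longlongrightarrow> 0) at_top"
    by (simp add: add.commute)
  then show ?thesis
    unfolding absPsi_def[abs_def] by (auto intro: tendsto_eq_intros)
qed

lemma absPsi_tendsto_at_bot: "(absPsi wc \<longlongrightarrow> 0) at_bot"
  unfolding filterlim_at_bot_mirror absPsi_minus using absPsi_tendsto_at_top by simp

lemma tendsto_sq_ratio_zero:
  fixes f :: "'a \<Rightarrow> real"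
  assumes "(f \<longlongrightarrow> 0) F"
  shows "((\<lambda>x. \<delta>\<^sup>2 * (f x)\<^sup>2 / (1 - \<delta>\<^sup>2 * (f x)\<^sup>2)) \<longlongrightarrow> 0) F"
  using assms by (auto intro!: tendsto_eq_intros)

theorem mainTheorem2:
  fixes wc :: real
  assumes "wc > 0"
  shows "(\<forall>w::real. (\<lambda>D::nat. cmod (psiD wc D (exp (- 2 * \<i> * complex_of_real w / of_nat D))))
            \<longlonglongrightarrow> absPsi wc w)
    \<and> (absPsi wc \<longlongrightarrow> 0) at_top \<and> (absPsi wc \<longlongrightarrow> 0) at_bot
    \<and> (\<forall>\<delta>::real. 0 < \<delta> \<and> \<delta> < 1 \<longrightarrow>
         ((\<lambda>w. \<delta>\<^sup>2 * (absPsi wc w)\<^sup>2 / (1 - \<delta>\<^sup>2 * (absPsi wc w)\<^sup>2)) \<longlongrightarrow> 0) at_top \<and>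
         ((\<lambda>w. \<delta>\<^sup>2 * (absPsi wc w)\<^sup>2 / (1 - \<delta>\<^sup>2 * (absPsi wc w)\<^sup>2)) \<longlongrightarrow> 0) at_bot)"
  using psiD_tendsto_absPsi absPsi_tendsto_at_top absPsi_tendsto_at_bot
    tendsto_sq_ratio_zero[OF absPsi_tendsto_at_top] tendsto_sq_ratio_zero[OF absPsi_tendsto_at_bot]
  by blast

end
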